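(* Let $\Omega\subset\mathbb{R}^n$ be open, $\omega$ a weight, $1\le p<q<\infty$, $a\in L^\infty(\Omega)$ non-negative, and $\varphi(x,t)=t^p+a(x)t^q$. Then $\varphi$ satisfies (A0), (A2)$_\omega$ and (Inc)$_p$.
   Context: A weight is a nonnegative locally integrable function $\omega$ on $\mathbb{R}^n$; $L^1(\Omega,\omega)$ is the set of measurable $h$ with $\int_\Omega|h|\omega\,dx<\infty$. (A0): there is $\beta_0\in(0,1]$ with $\varphi(x,\beta_0)\le1\le\varphi(x,1/\beta_0)$ for a.e. $x\in\Omega$. (A2)$_\omega$: for every $s>0$ there exist $\beta_2\in(0,1]$ and $h\in L^1(\Omega,\omega)\cap L^\infty(\Omega)$, $h\ge0$, such that $\varphi(x,\beta_2t)\le\varphi(y,t)+h(x)+h(y)$ for a.e. $x,y\in\Omega$ whenever $\varphi(y,t)\in[0,s]$. (Inc)$_p$: for a.e. $x$, $t\mapsto\varphi(x,t)/t^p$ is increasing on $(0,\infty)$. *)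

theory Defs
  imports "HOL-Analysis.Analysis"
begin

definition weight :: "('a::euclidean_space \<Rightarrow> real) \<Rightarrow> bool" where
  "weight \<omega> \<longleftrightarrow> (\<forall>x. 0 \<le> \<omega> x) \<and> (\<forall>K. compact K \<longrightarrow> set_integrable lebesgue K \<omega>)"

definition Linf_on :: "'a::euclidean_space set \<Rightarrow> ('a \<Rightarrow> real) \<Rightarrow> bool" where
  "Linf_on \<Omega> f \<longleftrightarrow> set_borel_measurable lebesgue \<Omega> f \<and>
     (\<exists>C. AE x in lebesgue. x \<in> \<Omega> \<longrightarrow> \<bar>f x\<bar> \<le> C)"

definition L1w_on :: "'a::euclidean_space set \<Rightarrow> ('a \<Rightarrow> real) \<Rightarrow> ('a \<Rightarrow> real) \<Rightarrow> bool" where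
  "L1w_on \<Omega> \<omega> h \<longleftrightarrow> set_borel_measurable lebesgue \<Omega> h \<and>
     (\<integral>\<^sup>+x\<in>\<Omega>. ennreal (\<bar>h x\<bar> * \<omega> x) \<partial>lebesgue) < \<infinity>"

definition cond_A0 :: "'a::euclidean_space set \<Rightarrow> ('a \<Rightarrow> real \<Rightarrow> real) \<Rightarrow> bool" where
  "cond_A0 \<Omega> \<phi> \<longleftrightarrow> (\<exists>\<beta>0. 0 < \<beta>0 \<and> \<beta>0 \<le> 1 \<and>
     (AE x in lebesgue. x \<in> \<Omega> \<longrightarrow> \<phi> x \<beta>0 \<le> 1 \<and> 1 \<le> \<phi> x (1 / \<beta>0)))"

definition cond_A2w :: "'a::euclidean_space set \<Rightarrow> ('a \<Rightarrow> real) \<Rightarrow> ('a \<Rightarrow> real \<Rightarrow> real) \<Rightarrow> bool" where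
  "cond_A2w \<Omega> \<omega> \<phi> \<longleftrightarrow> (\<forall>s>0. \<exists>\<beta>2 h. 0 < \<beta>2 \<and> \<beta>2 \<le> 1 \<and>
     L1w_on \<Omega> \<omega> h \<and> Linf_on \<Omega> h \<and> (\<forall>x\<in>\<Omega>. 0 \<le> h x) \<and>
     (\<exists>N \<in> null_sets lebesgue. \<forall>x\<in>\<Omega> - N. \<forall>y\<in>\<Omega> - N. \<forall>t\<ge>0.
        0 \<le> \<phi> y t \<and> \<phi> y t \<le> s \<longrightarrow> \<phi> x (\<beta>2 * t) \<le> \<phi> y t + h x + h y))"

definition cond_Inc :: "'a::euclidean_space set \<Rightarrow> real \<Rightarrow> ('a \<Rightarrow> real \<Rightarrow> real) \<Rightarrow> bool" where
  "cond_Inc \<Omega> p \<phi> \<longleftrightarrow> (AE x in lebesgue. x \<in> \<Omega> \<longrightarrow>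
     mono_on {0<..} (\<lambda>t. \<phi> x t / t powr p))"

end

theory Submission
  imports Defs
begin

text \<open>All three conditions are pointwise statements about the functions
  t \<mapsto> t^p + c t^q with 0 \<le> c \<le> K, where K is an essential bound of a; the exceptional
  null set is the one where this bound fails. (Inc)_p holds because
  \<phi>(x,t) / t^p = 1 + a(x) t^(q-p). Since p, q \<ge> 1, we have \<phi>(x, \<beta> t) \<le> \<beta> \<phi>(x,t) for
  \<beta> \<le> 1, which gives (A0) with \<beta>_0 = 1/(1+K). For (A2)_\<omega> one can even take h = 0:
  if \<phi>(y,t) \<le> s then t^p \<le> s, hence t^q \<le> s^((q-p)/p) t^p, and
  \<beta>_2 = 1/(1 + K s^((q-p)/p)) yields \<phi>(x, \<beta>_2 t) \<le> \<beta>_2 (t^p + K t^q) \<le> t^p \<le> \<phi>(y,t).\<close>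

definition double_phase :: "real \<Rightarrow> real \<Rightarrow> real \<Rightarrow> real \<Rightarrow> real" where
  "double_phase p q c t = t powr p + c * t powr q"

lemma double_phase_mono_coeff:
  "c \<le> d \<Longrightarrow> double_phase p q c t \<le> double_phase p q d t"
  by (simp add: double_phase_def mult_right_mono)

lemma one_le_double_phase:
  assumes "0 \<le> p" "0 \<le> c" "1 \<le> t"
  shows "1 \<le> double_phase p q c t"
  using ge_one_powr_ge_zero[of t p] assms by (simp add: double_phase_def add_increasing2)

lemma double_phase_scale_le:
  assumes "1 \<le> p" "1 \<le> q" "0 \<le> c" "0 < \<beta>" "\<beta> \<le> 1" "0 \<le> t"
  shows "double_phase p q c (\<beta> * t) \<le> \<beta> * double_phase p q c t"
proof -
  have "(\<beta> * t) powr p \<le> \<beta> * t powr p"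
    using powr_le_one_le[of \<beta> p] assms by (simp add: powr_mult mult_right_mono)
  moreover have "(\<beta> * t) powr q \<le> \<beta> * t powr q"
    using powr_le_one_le[of \<beta> q] assms by (simp add: powr_mult mult_right_mono)
  ultimately show ?thesis
    using \<open>0 \<le> c\<close> unfolding double_phase_def distrib_left
    by (metis add_mono mult.left_commute mult_left_mono)
qed

lemma double_phase_div_powr:
  "0 < t \<Longrightarrow> double_phase p q c t / t powr p = 1 + c * t powr (q - p)"
  by (simp add: double_phase_def powr_diff field_simps)

lemma mono_on_double_phase_div_powr:
  assumes "p \<le> q" "0 \<le> c"
  shows "mono_on {0<..} (\<lambda>t. double_phase p q c t / t powr p)"
proof (rule mono_onI)
  fix r t :: real
  assume "r \<in> {0<..}" "t \<in> {0<..}" "r \<le> t"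
  then show "double_phase p q c r / r powr p \<le> double_phase p q c t / t powr p"
    using assms by (simp add: double_phase_div_powr mult_left_mono powr_mono2)
qed

lemma powr_le_lower_powr_mult:
  fixes t p q s :: real
  assumes "0 < p" "p \<le> q" "t powr p \<le> s"
  shows "t powr q \<le> s powr ((q - p) / p) * t powr p"
proof -
  have "t powr (q - p) = (t powr p) powr ((q - p) / p)"
    using assms by (simp add: powr_powr)
  also have "\<dots> \<le> s powr ((q - p) / p)"
    using assms by (intro powr_mono2) auto
  finally have "t powr (q - p) \<le> s powr ((q - p) / p)" .
  then have "t powr p * t powr (q - p) \<le> t powr p * s powr ((q - p) / p)"
    by (simp add: mult_left_mono)
  then show ?thesis
    by (simp add: powr_add[symmetric] mult.commute)
qed

lemma double_phase_rescaled_le: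
  assumes "1 \<le> p" "p \<le> q" "0 \<le> c" "c \<le> K" "0 \<le> d" "0 \<le> t"
    and "double_phase p q d t \<le> s"
  shows "double_phase p q c (1 / (1 + K * s powr ((q - p) / p)) * t) \<le> double_phase p q d t"
proof -
  define M where "M = s powr ((q - p) / p)"
  define \<beta> where "\<beta> = 1 / (1 + K * M)"
  have KM: "0 \<le> K * M"
    using assms unfolding M_def by simp
  have tp: "t powr p \<le> double_phase p q d t"
    using assms by (simp add: double_phase_def)
  then have "t powr p \<le> s"
    using assms by linarith
  then have tq: "t powr q \<le> M * t powr p"
    unfolding M_def using assms by (intro powr_le_lower_powr_mult) auto
  have "double_phase p q c (\<beta> * t) \<le> \<beta> * double_phase p q c t"
    using assms KM by (intro double_phase_scale_le) (auto simp: \<beta>_def)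
  also have "\<dots> \<le> \<beta> * double_phase p q K t"
    using assms KM by (intro mult_left_mono double_phase_mono_coeff) (auto simp: \<beta>_def)
  also have "\<dots> \<le> \<beta> * ((1 + K * M) * t powr p)"
  proof (rule mult_left_mono)
    show "double_phase p q K t \<le> (1 + K * M) * t powr p"
      using tq assms by (simp add: double_phase_def algebra_simps mult_left_mono)
    show "0 \<le> \<beta>"
      using KM by (simp add: \<beta>_def)
  qed
  also have "\<dots> = t powr p"
    using KM by (simp add: \<beta>_def)
  also note tp
  finally show ?thesis
    unfolding \<beta>_def M_def .
qed

lemma cond_Inc_double_phase:
  assumes "p \<le> q" and "AE x in lebesgue. x \<in> \<Omega> \<longrightarrow> 0 \<le> a x"
  shows "cond_Inc \<Omega> p (\<lambda>x. double_phase p q (a x))"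
  unfolding cond_Inc_def using assms(2)
  by eventually_elim (use assms(1) mono_on_double_phase_div_powr in blast)

lemma cond_A0_double_phase:
  assumes "1 \<le> p" "p \<le> q" "0 \<le> K"
    and "AE x in lebesgue. x \<in> \<Omega> \<longrightarrow> 0 \<le> a x \<and> a x \<le> K"
  shows "cond_A0 \<Omega> (\<lambda>x. double_phase p q (a x))"
  unfolding cond_A0_def
proof (intro exI conjI)
  define \<beta> where "\<beta> = 1 / (1 + K)"
  show \<beta>: "0 < \<beta>" "\<beta> \<le> 1"
    using assms unfolding \<beta>_def by auto
  show "AE x in lebesgue. x \<in> \<Omega> \<longrightarrow>
      double_phase p q (a x) \<beta> \<le> 1 \<and> 1 \<le> double_phase p q (a x) (1 / \<beta>)"
    using assms(4)
  proof eventually_elim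
    case (elim x)
    show ?case
    proof (intro impI conjI)
      assume "x \<in> \<Omega>"
      with elim have a: "0 \<le> a x" "a x \<le> K" by auto
      have "double_phase p q (a x) (\<beta> * 1) \<le> \<beta> * double_phase p q (a x) 1"
        using assms a \<beta> by (intro double_phase_scale_le) auto
      also have "\<dots> \<le> \<beta> * (1 + K)"
        using a \<beta> by (simp add: double_phase_def)
      finally show "double_phase p q (a x) \<beta> \<le> 1"
        using assms by (simp add: \<beta>_def)
      show "1 \<le> double_phase p q (a x) (1 / \<beta>)"
        using assms a \<beta> by (intro one_le_double_phase) auto
    qed
  qed
qed

lemma cond_A2w_double_phase:
  assumes "1 \<le> p" "p \<le> q" "0 \<le> K"
    and "AE x in lebesgue. x \<in> \<Omega> \<longrightarrow> 0 \<le> a x \<and> a x \<le> K"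
  shows "cond_A2w \<Omega> \<omega> (\<lambda>x. double_phase p q (a x))"
  unfolding cond_A2w_def
proof (intro allI impI)
  fix s :: real
  assume "0 < s"
  obtain N where bounded: "\<And>x. x \<in> space lebesgue - N \<Longrightarrow> x \<in> \<Omega> \<longrightarrow> 0 \<le> a x \<and> a x \<le> K"
    and N: "N \<in> null_sets lebesgue"
    using AE_E3[OF assms(4)] by blast
  define \<beta> where "\<beta> = 1 / (1 + K * s powr ((q - p) / p))"
  have "0 \<le> K * s powr ((q - p) / p)"
    using assms by simp
  then have "0 < \<beta>" "\<beta> \<le> 1"
    unfolding \<beta>_def by auto
  moreover have "L1w_on \<Omega> \<omega> (\<lambda>_. 0)" "Linf_on \<Omega> (\<lambda>_. 0)"
    unfolding L1w_on_def Linf_on_def set_borel_measurable_def by auto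
  moreover have "double_phase p q (a x) (\<beta> * t) \<le> double_phase p q (a y) t + 0 + 0"
    if "x \<in> \<Omega> - N" "y \<in> \<Omega> - N" "0 \<le> t" "double_phase p q (a y) t \<le> s" for x y t
    using double_phase_rescaled_le[of p q "a x" K "a y" t s] assms bounded that
    unfolding \<beta>_def by simp
  ultimately show "\<exists>\<beta>2 h. 0 < \<beta>2 \<and> \<beta>2 \<le> 1 \<and>
      L1w_on \<Omega> \<omega> h \<and> Linf_on \<Omega> h \<and> (\<forall>x\<in>\<Omega>. 0 \<le> h x) \<and>
      (\<exists>N \<in> null_sets lebesgue. \<forall>x\<in>\<Omega> - N. \<forall>y\<in>\<Omega> - N. \<forall>t\<ge>0.
         0 \<le> double_phase p q (a y) t \<and> double_phase p q (a y) t \<le> s \<longrightarrow>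
         double_phase p q (a x) (\<beta>2 * t) \<le> double_phase p q (a y) t + h x + h y)"
    using N by blast
qed

lemma Linf_on_nonneg_bound:
  assumes "Linf_on \<Omega> a" and "AE x in lebesgue. x \<in> \<Omega> \<longrightarrow> 0 \<le> a x"
  obtains K :: real where "0 \<le> K" "AE x in lebesgue. x \<in> \<Omega> \<longrightarrow> 0 \<le> a x \<and> a x \<le> K"
proof -
  obtain C where "AE x in lebesgue. x \<in> \<Omega> \<longrightarrow> \<bar>a x\<bar> \<le> C"
    using assms(1) unfolding Linf_on_def by blast
  with assms(2) have "AE x in lebesgue. x \<in> \<Omega> \<longrightarrow> 0 \<le> a x \<and> a x \<le> \<bar>C\<bar>"
    by eventually_elim auto
  then show thesis
    using that[of "\<bar>C\<bar>"] by simp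
qed

theorem lemma5p8:
  fixes \<Omega> :: "'a::euclidean_space set" and \<omega> a :: "'a \<Rightarrow> real" and p q :: real
    and \<phi> :: "'a \<Rightarrow> real \<Rightarrow> real"
  assumes "open \<Omega>" and "weight \<omega>" and "1 \<le> p" and "p < q"
    and "Linf_on \<Omega> a" and "AE x in lebesgue. x \<in> \<Omega> \<longrightarrow> 0 \<le> a x"
    and "\<And>x t. \<phi> x t = t powr p + a x * t powr q"
  shows "cond_A0 \<Omega> \<phi> \<and> cond_A2w \<Omega> \<omega> \<phi> \<and> cond_Inc \<Omega> p \<phi>"
proof -
  have \<phi>: "\<phi> = (\<lambda>x. double_phase p q (a x))"
    using assms(7) by (simp add: double_phase_def fun_eq_iff)
  obtain K where "0 \<le> K" "AE x in lebesgue. x \<in> \<Omega> \<longrightarrow> 0 \<le> a x \<and> a x \<le> K"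
    using Linf_on_nonneg_bound assms(5,6) by blast
  with assms(3,4,6) show ?thesis
    unfolding \<phi>
    by (simp add: cond_A0_double_phase cond_A2w_double_phase cond_Inc_double_phase)
qed

end
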